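(* Let $\phi_1,\phi_2\in D=\{z\in\mathbb{C};|z|<1\}$ and let $Z$ be a random variable on $\partial D=\{z\in\mathbb{C};|z|=1\}$ with density, with respect to arc length, $$f(z)=\frac{1}{2\pi}\frac{|1-\phi_1\overline{\phi_2}|^2}{1-|\phi_1\overline{\phi_2}|^2}\frac{1-|\phi_1|^2}{|z-\phi_1|^2}\frac{1-|\phi_2|^2}{|z-\phi_2|^2},\qquad z\in\partial D.$$ Then for every nonnegative integer $n$ (the $n$th trigonometric moment), $$E(Z^n)=\begin{cases}\dfrac{(1-|\phi_2|^2)(1-\overline{\phi_1}\phi_2)\phi_1^{n+1}-(1-|\phi_1|^2)(1-\phi_1\overline{\phi_2})\phi_2^{n+1}}{(\phi_1-\phi_2)(1-|\phi_1\overline{\phi_2}|^2)}, & \phi_1\ne\phi_2,\\[2ex] \dfrac{1+n+(1-n)|\phi_1|^2}{1+|\phi_1|^2}\phi_1^n, & \phi_1=\phi_2.\end{cases}$$ *)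

theory Defs
  imports "HOL-Probability.Probability"
begin

definition arc_length_circle :: "complex measure" where
  "arc_length_circle = distr (restrict_space lborel {0..<2*pi}) borel cis"

definition circ_density :: "complex \<Rightarrow> complex \<Rightarrow> complex \<Rightarrow> real" where
  "circ_density \<phi>1 \<phi>2 z =
     1 / (2*pi) * (cmod (1 - \<phi>1 * cnj \<phi>2))^2 / (1 - (cmod (\<phi>1 * cnj \<phi>2))^2)
     * (1 - (cmod \<phi>1)^2) / (cmod (z - \<phi>1))^2
     * (1 - (cmod \<phi>2)^2) / (cmod (z - \<phi>2))^2"

end

theory Submission
  imports Defs "HOL-Complex_Analysis.Complex_Analysis"
begin

text \<open>On the unit circle \<open>|z - \<phi>|\<^sup>2 = (z - \<phi>)(1 - cnj \<phi> z) / z\<close>, so the density restricted to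
  the circle is the rational function \<open>c z\<^sup>2 / (2\<pi> (z - \<phi>1)(1 - cnj \<phi>1 z)(z - \<phi>2)(1 - cnj \<phi>2 z))\<close>.
  Parametrising the circle by \<open>cis\<close> turns \<open>E(Z\<^sup>n)\<close> into the contour integral
  \<open>c/(2\<pi>i) \<ointegral> h(z) / ((z - \<phi>1)(z - \<phi>2)) dz\<close> with \<open>h(z) = z^(n+1) / ((1 - cnj \<phi>1 z)(1 - cnj \<phi>2 z))\<close>
  holomorphic on the closed disc. Cauchy's integral formula evaluates it as the divided difference
  \<open>c (h(\<phi>1) - h(\<phi>2)) / (\<phi>1 - \<phi>2)\<close>, or \<open>c h'(\<phi>1)\<close> when the two poles coincide.\<close>

lemma of_real_cmod_squared: "(complex_of_real (cmod z))\<^sup>2 = z * cnj z"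
  using complex_norm_square[of z] by simp

lemma norm_mult_less_one:
  fixes a b :: "'a :: real_normed_algebra"
  assumes "norm a < 1" and "norm b < 1"
  shows "norm (a * b) < 1"
proof -
  have "norm a * norm b < 1"
    using assms by (metis mult_strict_mono' norm_ge_zero mult_1_right)
  then show ?thesis
    using norm_mult_ineq[of a b] by linarith
qed

lemma one_minus_cnj_mult_nonzero:
  fixes a z :: complex
  assumes "cmod a < 1" and "cmod z \<le> 1"
  shows "1 - cnj a * z \<noteq> 0"
proof
  assume "1 - cnj a * z = 0"
  then have "cmod a * cmod z = 1"
    by (metis complex_mod_cnj eq_iff_diff_eq_0 norm_mult norm_one)
  moreover have "cmod a * cmod z \<le> cmod a"
    using assms(2) by (simp add: mult_left_le)
  ultimately show False
    using assms(1) by simp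
qed

lemma cmod_diff_squared_on_unit_circle:
  fixes a z :: complex
  assumes "cmod z = 1"
  shows "of_real ((cmod (z - a))\<^sup>2) * z = (z - a) * (1 - cnj a * z)"
proof -
  have "cnj z * z = 1"
    using complex_norm_square[of z] assms by (simp add: mult.commute)
  moreover have "of_real ((cmod (z - a))\<^sup>2) * z = (z - a) * (cnj z * z - cnj a * z)"
    by (simp only: complex_norm_square) (simp add: algebra_simps)
  ultimately show ?thesis
    by simp
qed

lemma circ_density_nonneg:
  fixes \<phi>1 \<phi>2 z :: complex
  assumes "cmod \<phi>1 < 1" and "cmod \<phi>2 < 1"
  shows "circ_density \<phi>1 \<phi>2 z \<ge> 0"
proof -
  have "cmod (\<phi>1 * cnj \<phi>2) < 1"
    using assms by (intro norm_mult_less_one) simp_all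
  then show ?thesis
    unfolding circ_density_def using assms
    by (intro mult_nonneg_nonneg divide_nonneg_nonneg) (simp_all add: abs_square_le_1 less_imp_le)
qed

lemma borel_measurable_circ_density: "circ_density \<phi>1 \<phi>2 \<in> borel_measurable borel"
  unfolding circ_density_def[abs_def] by measurable

text \<open>The constant \<open>c\<close>: \<open>2\<pi>\<close> times the constant factor of \<open>circ_density\<close>, with every
  \<open>|w|\<^sup>2\<close> written as \<open>w * cnj w\<close>.\<close>
definition circ_normalizer :: "complex \<Rightarrow> complex \<Rightarrow> complex" where
  "circ_normalizer \<phi>1 \<phi>2 =
    (1 - cnj \<phi>1 * \<phi>1) * (1 - cnj \<phi>2 * \<phi>2) * (1 - \<phi>1 * cnj \<phi>2) * (1 - cnj \<phi>1 * \<phi>2)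
      / (1 - \<phi>1 * cnj \<phi>1 * (\<phi>2 * cnj \<phi>2))"

lemma circ_normalizer_denominator_nonzero:
  fixes \<phi>1 \<phi>2 :: complex
  assumes "cmod \<phi>1 < 1" and "cmod \<phi>2 < 1"
  shows "1 - \<phi>1 * cnj \<phi>1 * (\<phi>2 * cnj \<phi>2) \<noteq> 0"
proof -
  have "cmod (cnj \<phi>1 * \<phi>2) < 1"
    using assms by (intro norm_mult_less_one) simp_all
  then have "1 - cnj (cnj \<phi>1 * \<phi>2) * (cnj \<phi>1 * \<phi>2) \<noteq> 0"
    by (intro one_minus_cnj_mult_nonzero) simp_all
  then show ?thesis
    by (simp add: mult_ac)
qed

lemma circ_density_on_unit_circle:
  fixes \<phi>1 \<phi>2 z :: complex
  assumes "cmod \<phi>1 < 1" and "cmod \<phi>2 < 1" and "cmod z = 1"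
  shows "of_real (circ_density \<phi>1 \<phi>2 z) = circ_normalizer \<phi>1 \<phi>2 / (2 * pi)
    * z\<^sup>2 / ((z - \<phi>1) * (1 - cnj \<phi>1 * z) * ((z - \<phi>2) * (1 - cnj \<phi>2 * z)))"
    (is "_ = ?rhs")
proof -
  have z0: "z \<noteq> 0"
    using assms(3) by auto
  have dist: "(complex_of_real (cmod (z - \<phi>)))\<^sup>2 = (z - \<phi>) * (1 - cnj \<phi> * z) / z" for \<phi>
    using cmod_diff_squared_on_unit_circle[OF assms(3), of \<phi>] z0 by (simp add: field_simps)
  have nonzero: "z - \<phi>1 \<noteq> 0" "z - \<phi>2 \<noteq> 0" "1 - cnj \<phi>1 * z \<noteq> 0" "1 - cnj \<phi>2 * z \<noteq> 0"
    using assms one_minus_cnj_mult_nonzero by auto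
  have "of_real (circ_density \<phi>1 \<phi>2 z) =
      1 / (2 * pi) * (1 - \<phi>1 * cnj \<phi>2) * (1 - cnj \<phi>1 * \<phi>2) / (1 - \<phi>1 * cnj \<phi>1 * (\<phi>2 * cnj \<phi>2))
      * (1 - cnj \<phi>1 * \<phi>1) / ((z - \<phi>1) * (1 - cnj \<phi>1 * z) / z)
      * (1 - cnj \<phi>2 * \<phi>2) / ((z - \<phi>2) * (1 - cnj \<phi>2 * z) / z)"
    unfolding circ_density_def of_real_mult of_real_divide of_real_diff of_real_1 of_real_power dist
    unfolding of_real_cmod_squared by (simp add: mult_ac)
  also have "\<dots> = ?rhs"
  proof -
    \<comment> \<open>Stated over fresh variables so that \<open>field_simps\<close> does not multiply out the factors.\<close>
    have "1 / (2 * pi) * A1 * A2 / B * P1 / (D1 / z) * P2 / (D2 / z) = P1 * P2 * A1 * A2 / B / (2 * pi) * z\<^sup>2 / (D1 * D2)"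
      if "D1 \<noteq> 0" "D2 \<noteq> 0" for A1 A2 B P1 P2 D1 D2 :: complex
      using that z0 by (simp add: field_simps power2_eq_square)
    then show ?thesis
      unfolding circ_normalizer_def by this (use nonzero in auto)
  qed
  finally show ?thesis .
qed

lemma has_integral_cis_of_contour_integral:
  fixes g :: "complex \<Rightarrow> complex"
  assumes "(g has_contour_integral I) (circlepath 0 1)"
  shows "((\<lambda>t. \<i> * cis t * g (cis t)) has_integral I) {0..2*pi}"
proof -
  have "((\<lambda>u. 2 * pi * (\<i> * cis (2*pi*u) * g (cis (2*pi*u)))) has_integral I) (cbox 0 1)"
    unfolding cbox_interval
  proof (rule has_integral_eq[OF _ assms[unfolded has_contour_integral_def]])
    fix u :: real
    assume "u \<in> {0..1}"
    then show "g (circlepath 0 1 u) * vector_derivative (circlepath 0 1) (at u within {0..1}) =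
        2 * pi * (\<i> * cis (2*pi*u) * g (cis (2*pi*u)))"
      by (subst vector_derivative_circlepath01) (auto simp: circlepath cis_conv_exp mult_ac)
  qed
  then have "((\<lambda>t. 2 * pi * (\<i> * cis (2*pi*((1/(2*pi)) *\<^sub>R t + 0)) * g (cis (2*pi*((1/(2*pi)) *\<^sub>R t + 0)))))
      has_integral I /\<^sub>R (1/(2*pi)) ^ DIM(real)) (cbox ((0 - 0) /\<^sub>R (1/(2*pi))) ((1 - 0) /\<^sub>R (1/(2*pi))))"
    by (rule has_integral_affinity') simp
  then have "((\<lambda>t. 2 * pi * (\<i> * cis t * g (cis t))) has_integral 2 * pi * I) {0..2*pi}"
    by (simp add: cbox_interval scaleR_conv_of_real)
  then have "((\<lambda>t. 1 / (2*pi) * (2 * pi * (\<i> * cis t * g (cis t)))) has_integral 1 / (2*pi) * (2 * pi * I)) {0..2*pi}"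
    by (rule has_integral_mult_right)
  then show ?thesis
    by simp
qed

lemma Cauchy_integral_circlepath_two_poles:
  assumes "h holomorphic_on cball c r" and "w1 \<in> ball c r" and "w2 \<in> ball c r" and "w1 \<noteq> w2"
  shows "((\<lambda>z. h z / ((z - w1) * (z - w2))) has_contour_integral
    2 * of_real pi * \<i> * (h w1 - h w2) / (w1 - w2)) (circlepath c r)"
proof -
  have "((\<lambda>z. (h z / (z - w1) - h z / (z - w2)) / (w1 - w2)) has_contour_integral
      (2 * of_real pi * \<i> * h w1 - 2 * of_real pi * \<i> * h w2) / (w1 - w2)) (circlepath c r)"
    using assms(2,3)
    by (intro has_contour_integral_div has_contour_integral_diff
        Cauchy_integral_circlepath_simple[OF assms(1)]) (auto simp: dist_norm norm_minus_commute)
  then have "((\<lambda>z. (h z / (z - w1) - h z / (z - w2)) / (w1 - w2)) has_contour_integral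
      2 * of_real pi * \<i> * (h w1 - h w2) / (w1 - w2)) (circlepath c r)"
    by (simp add: algebra_simps)
  then show ?thesis
  proof (rule has_contour_integral_eq)
    fix z
    assume "z \<in> path_image (circlepath c r)"
    then have "z - w1 \<noteq> 0" "z - w2 \<noteq> 0" "w1 - w2 \<noteq> 0"
      using assms(2-4) by (auto simp: path_image_circlepath)
    then show "(h z / (z - w1) - h z / (z - w2)) / (w1 - w2) = h z / ((z - w1) * (z - w2))"
      by (simp add: divide_simps) (simp add: algebra_simps)
  qed
qed

lemma Cauchy_integral_circlepath_double_pole:
  assumes "h holomorphic_on cball c r" and "w \<in> ball c r"
  shows "((\<lambda>z. h z / (z - w)\<^sup>2) has_contour_integral 2 * of_real pi * \<i> * deriv h w) (circlepath c r)"
  using Cauchy_has_contour_integral_higher_derivative_circlepath[of c r h w 1] assms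
  by (simp add: holomorphic_on_imp_continuous_on holomorphic_on_subset[OF assms(1)] power2_eq_square)

lemma integral_distributed_arc_length_circle:
  fixes M :: "'a measure" and Z :: "'a \<Rightarrow> complex"
    and d :: "complex \<Rightarrow> real" and g :: "complex \<Rightarrow> complex"
  assumes dist: "distributed M arc_length_circle Z (\<lambda>z. ennreal (d z))"
    and d_nonneg: "\<And>z. d z \<ge> 0"
    and [measurable]: "d \<in> borel_measurable borel" "g \<in> borel_measurable borel"
    and cont: "continuous_on {0..2*pi} (\<lambda>t. of_real (d (cis t)) * g (cis t))"
  shows "integral\<^sup>L M (\<lambda>\<omega>. g (Z \<omega>)) = integral {0..2*pi} (\<lambda>t. of_real (d (cis t)) * g (cis t))"
proof -
  have sets_arc: "sets arc_length_circle = sets borel"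
    by (simp add: arc_length_circle_def)
  have [measurable]: "cis \<in> borel_measurable borel"
    by (intro borel_measurable_continuous_onI continuous_intros)
  have "integral\<^sup>L M (\<lambda>\<omega>. g (Z \<omega>)) = integral\<^sup>L (distr M arc_length_circle Z) g"
    using dist by (intro integral_distr[symmetric]) (auto simp: distributed_def measurable_cong_sets[OF sets_arc refl])
  also have "\<dots> = integral\<^sup>L arc_length_circle (\<lambda>z. d z *\<^sub>R g z)"
    using dist d_nonneg
    by (auto simp: distributed_def measurable_cong_sets[OF sets_arc refl] intro!: integral_density)
  also have "\<dots> = integral\<^sup>L (restrict_space lborel {0..<2*pi}) (\<lambda>t. d (cis t) *\<^sub>R g (cis t))"
    unfolding arc_length_circle_def
    by (intro integral_distr measurable_restrict_space1) measurable
  also have "\<dots> = integral\<^sup>L lborel (\<lambda>t. indicator {0..<2*pi} t *\<^sub>R (d (cis t) *\<^sub>R g (cis t)))"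
    by (rule integral_restrict_space) simp
  also have "\<dots> = integral\<^sup>L lborel (\<lambda>t. indicator {0..2*pi} t *\<^sub>R (d (cis t) *\<^sub>R g (cis t)))"
  proof (rule integral_cong_AE)
    show "AE t in lborel. indicator {0..<2*pi} t *\<^sub>R (d (cis t) *\<^sub>R g (cis t)) =
        indicator {0..2*pi} t *\<^sub>R (d (cis t) *\<^sub>R g (cis t))"
      using AE_lborel_singleton[of "2*pi"] by eventually_elim (auto simp: indicator_def)
  qed (measurable; fail)+
  also have "\<dots> = (LINT t : {0..2*pi} | lborel. of_real (d (cis t)) * g (cis t))"
    by (simp add: set_lebesgue_integral_def scaleR_conv_of_real)
  also have "\<dots> = integral {0..2*pi} (\<lambda>t. of_real (d (cis t)) * g (cis t))"
    using cont by (intro set_borel_integral_eq_integral(2)) (simp add: set_integrable_def borel_integrable_compact)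
  finally show ?thesis .
qed

lemma circ_density_moment_on_unit_circle:
  fixes \<phi>1 \<phi>2 z :: complex and n :: nat
  assumes "cmod \<phi>1 < 1" and "cmod \<phi>2 < 1" and "cmod z = 1"
  shows "of_real (circ_density \<phi>1 \<phi>2 z) * z ^ n = \<i> * z * (circ_normalizer \<phi>1 \<phi>2 / (2 * of_real pi * \<i>)
    * (z ^ (n + 1) / ((1 - cnj \<phi>1 * z) * (1 - cnj \<phi>2 * z)) / ((z - \<phi>1) * (z - \<phi>2))))"
proof -
  have "z - \<phi>1 \<noteq> 0" "z - \<phi>2 \<noteq> 0" "1 - cnj \<phi>1 * z \<noteq> 0" "1 - cnj \<phi>2 * z \<noteq> 0"
    using assms one_minus_cnj_mult_nonzero by auto
  moreover have "c / (2 * pi) * z\<^sup>2 / (F1 * E1 * (F2 * E2)) * z ^ n =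
      \<i> * z * (c / (2 * of_real pi * \<i>) * (z ^ (n + 1) / (E1 * E2) / (F1 * F2)))"
    if "F1 \<noteq> 0" "F2 \<noteq> 0" "E1 \<noteq> 0" "E2 \<noteq> 0" for c E1 E2 F1 F2 :: complex
    using that by (simp add: field_simps power2_eq_square)
  ultimately show ?thesis
    unfolding circ_density_on_unit_circle[OF assms] by simp
qed

lemma circ_density_moment_has_integral:
  fixes \<phi>1 \<phi>2 :: complex and n :: nat
  assumes "cmod \<phi>1 < 1" and "cmod \<phi>2 < 1"
  defines "h \<equiv> \<lambda>z. z ^ (n + 1) / ((1 - cnj \<phi>1 * z) * (1 - cnj \<phi>2 * z))"
  shows "((\<lambda>t. of_real (circ_density \<phi>1 \<phi>2 (cis t)) * cis t ^ n) has_integral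
    circ_normalizer \<phi>1 \<phi>2 * (if \<phi>1 \<noteq> \<phi>2 then (h \<phi>1 - h \<phi>2) / (\<phi>1 - \<phi>2) else deriv h \<phi>1))
    {0..2*pi}"
proof -
  define c where "c = circ_normalizer \<phi>1 \<phi>2"
  define X where "X = (if \<phi>1 \<noteq> \<phi>2 then (h \<phi>1 - h \<phi>2) / (\<phi>1 - \<phi>2) else deriv h \<phi>1)"
  have hol: "h holomorphic_on cball 0 1"
    unfolding h_def using one_minus_cnj_mult_nonzero assms by (intro holomorphic_intros) auto
  have contour: "((\<lambda>z. h z / ((z - \<phi>1) * (z - \<phi>2))) has_contour_integral 2 * of_real pi * \<i> * X)
      (circlepath 0 1)"
  proof (cases "\<phi>1 = \<phi>2")
    case True
    then show ?thesis
      using Cauchy_integral_circlepath_double_pole[OF hol, of \<phi>1] assms by (simp add: X_def power2_eq_square)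
  next
    case False
    then show ?thesis
      using Cauchy_integral_circlepath_two_poles[OF hol, of \<phi>1 \<phi>2] assms by (simp add: X_def mult.assoc)
  qed
  have "c / (2 * of_real pi * \<i>) * (2 * of_real pi * \<i> * X) = c * X"
    by (simp add: field_simps)
  then have "((\<lambda>z. c / (2 * of_real pi * \<i>) * (h z / ((z - \<phi>1) * (z - \<phi>2)))) has_contour_integral c * X)
      (circlepath 0 1)"
    using has_contour_integral_lmul[OF contour, of "c / (2 * of_real pi * \<i>)"] by simp
  then have "((\<lambda>t. \<i> * cis t * (c / (2 * of_real pi * \<i>) * (h (cis t) / ((cis t - \<phi>1) * (cis t - \<phi>2)))))
      has_integral c * X) {0..2*pi}"
    by (rule has_integral_cis_of_contour_integral)
  then show ?thesis
    unfolding c_def[symmetric] X_def[symmetric]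
    by (rule has_integral_eq[rotated]) (simp add: circ_density_moment_on_unit_circle assms h_def c_def)
qed

lemma circ_moment_two_poles_closed_form:
  fixes \<phi>1 \<phi>2 :: complex and n :: nat
  assumes "cmod \<phi>1 < 1" and "cmod \<phi>2 < 1" and "\<phi>1 \<noteq> \<phi>2"
  defines "h \<equiv> \<lambda>z. z ^ (n + 1) / ((1 - cnj \<phi>1 * z) * (1 - cnj \<phi>2 * z))"
  shows "circ_normalizer \<phi>1 \<phi>2 * ((h \<phi>1 - h \<phi>2) / (\<phi>1 - \<phi>2)) =
    ((1 - (cmod \<phi>2)^2) * (1 - cnj \<phi>1 * \<phi>2) * \<phi>1 ^ (n+1)
       - (1 - (cmod \<phi>1)^2) * (1 - \<phi>1 * cnj \<phi>2) * \<phi>2 ^ (n+1))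
     / ((\<phi>1 - \<phi>2) * (1 - (cmod (\<phi>1 * cnj \<phi>2))^2))"
proof -
  have "1 - cnj \<phi>1 * \<phi>1 \<noteq> 0" "1 - cnj \<phi>2 * \<phi>2 \<noteq> 0" "1 - cnj \<phi>1 * \<phi>2 \<noteq> 0" "1 - cnj \<phi>2 * \<phi>1 \<noteq> 0"
    using assms(1,2) one_minus_cnj_mult_nonzero less_imp_le by blast+
  moreover have "\<phi>1 - \<phi>2 \<noteq> 0"
    using assms(3) by simp
  moreover have "1 - \<phi>1 * cnj \<phi>1 * (\<phi>2 * cnj \<phi>2) \<noteq> 0"
    using assms(1,2) by (rule circ_normalizer_denominator_nonzero)
  moreover have "P1 * P2 * A1 * A2 / B * ((u1 / (P1 * A1) - u2 / (A2 * P2)) / w) =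
      (P2 * A2 * u1 - P1 * A1 * u2) / (w * B)"
    if "P1 \<noteq> 0" "P2 \<noteq> 0" "A1 \<noteq> 0" "A2 \<noteq> 0" "w \<noteq> 0" "B \<noteq> 0" for P1 P2 A1 A2 B w u1 u2 :: complex
    using that by (simp add: field_simps)
  ultimately have "circ_normalizer \<phi>1 \<phi>2 * ((h \<phi>1 - h \<phi>2) / (\<phi>1 - \<phi>2)) =
      ((1 - cnj \<phi>2 * \<phi>2) * (1 - cnj \<phi>1 * \<phi>2) * \<phi>1 ^ (n+1)
        - (1 - cnj \<phi>1 * \<phi>1) * (1 - cnj \<phi>2 * \<phi>1) * \<phi>2 ^ (n+1))
      / ((\<phi>1 - \<phi>2) * (1 - \<phi>1 * cnj \<phi>1 * (\<phi>2 * cnj \<phi>2)))"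
    unfolding circ_normalizer_def h_def mult.commute[of \<phi>1 "cnj \<phi>2"] by simp
  also have "\<dots> = ((1 - (cmod \<phi>2)^2) * (1 - cnj \<phi>1 * \<phi>2) * \<phi>1 ^ (n+1)
       - (1 - (cmod \<phi>1)^2) * (1 - \<phi>1 * cnj \<phi>2) * \<phi>2 ^ (n+1))
     / ((\<phi>1 - \<phi>2) * (1 - (cmod (\<phi>1 * cnj \<phi>2))^2))"
    unfolding of_real_diff of_real_1 complex_norm_square by (simp add: algebra_simps)
  finally show ?thesis .
qed

lemma circ_moment_double_pole_closed_form:
  fixes \<phi> :: complex and n :: nat
  assumes "cmod \<phi> < 1"
  defines "h \<equiv> \<lambda>z. z ^ (n + 1) / ((1 - cnj \<phi> * z) * (1 - cnj \<phi> * z))"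
  shows "circ_normalizer \<phi> \<phi> * deriv h \<phi> =
    (1 + of_nat n + (1 - of_nat n) * (cmod \<phi>)^2) / (1 + (cmod \<phi>)^2) * \<phi> ^ n"
proof -
  define a where "a = cnj \<phi>"
  define P where "P = 1 - a * \<phi>"
  define Q where "Q = 1 + a * \<phi>"
  have P0: "P \<noteq> 0"
    unfolding P_def a_def using assms by (intro one_minus_cnj_mult_nonzero) simp_all
  have PQ: "P * Q = 1 - \<phi> * cnj \<phi> * (\<phi> * cnj \<phi>)"
    unfolding P_def Q_def a_def by (simp add: algebra_simps)
  then have Q0: "Q \<noteq> 0"
    using circ_normalizer_denominator_nonzero[OF assms(1) assms(1)] by auto
  have num: "((\<lambda>z. z ^ (n + 1)) has_field_derivative of_nat (n + 1) * \<phi> ^ n) (at \<phi>)"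
    by (auto intro!: derivative_eq_intros) (cases n; simp add: algebra_simps)
  have den: "((\<lambda>z. (1 - a * z) * (1 - a * z)) has_field_derivative - 2 * a * P) (at \<phi>)"
    unfolding P_def by (auto intro!: derivative_eq_intros simp: algebra_simps)
  have "(h has_field_derivative
      (of_nat (n + 1) * \<phi> ^ n * (P * P) - \<phi> ^ (n + 1) * (- 2 * a * P)) / (P * P * (P * P))) (at \<phi>)"
    using DERIV_divide[OF num den] P0 unfolding h_def a_def[symmetric] P_def by simp
  then have "deriv h \<phi> = (of_nat (n + 1) * \<phi> ^ n * (P * P) - \<phi> * \<phi> ^ n * (- 2 * a * P)) / (P * P * (P * P))"
    by (simp add: DERIV_imp_deriv)
  moreover have "circ_normalizer \<phi> \<phi> = P * P * (P * P) / (P * Q)"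
    unfolding circ_normalizer_def PQ unfolding P_def a_def by (simp add: mult.commute)
  moreover have "P * P * (P * P) / (P * Q) * ((m * x * (P * P) - \<phi> * x * (- 2 * a * P)) / (P * P * (P * P))) =
      (m * P + 2 * a * \<phi>) * x / Q" for m x :: complex
    using P0 Q0 by (simp add: field_simps)
  ultimately have "circ_normalizer \<phi> \<phi> * deriv h \<phi> = (of_nat (n + 1) * P + 2 * a * \<phi>) * \<phi> ^ n / Q"
    by simp
  also have "\<dots> = (1 + of_nat n + (1 - of_nat n) * (cmod \<phi>)^2) / (1 + (cmod \<phi>)^2) * \<phi> ^ n"
    unfolding P_def Q_def a_def of_real_divide of_real_add of_real_mult of_real_diff of_real_1
      of_real_of_nat_eq of_real_power of_real_cmod_squared
    by (simp add: algebra_simps)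
  finally show ?thesis .
qed

theorem theorem4:
  fixes M :: "'a measure" and Z :: "'a \<Rightarrow> complex"
    and \<phi>1 \<phi>2 :: complex and n :: nat
  assumes "cmod \<phi>1 < 1" and "cmod \<phi>2 < 1"
    and "prob_space M"
    and "distributed M arc_length_circle Z (\<lambda>z. ennreal (circ_density \<phi>1 \<phi>2 z))"
  shows "prob_space.expectation M (\<lambda>\<omega>. Z \<omega> ^ n) =
    (if \<phi>1 \<noteq> \<phi>2 then
       ((1 - (cmod \<phi>2)^2) * (1 - cnj \<phi>1 * \<phi>2) * \<phi>1 ^ (n+1)
         - (1 - (cmod \<phi>1)^2) * (1 - \<phi>1 * cnj \<phi>2) * \<phi>2 ^ (n+1))
       / ((\<phi>1 - \<phi>2) * (1 - (cmod (\<phi>1 * cnj \<phi>2))^2))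
     else
       (1 + of_nat n + (1 - of_nat n) * (cmod \<phi>1)^2) / (1 + (cmod \<phi>1)^2) * \<phi>1 ^ n)"
proof -
  define h where "h = (\<lambda>z. z ^ (n + 1) / ((1 - cnj \<phi>1 * z) * (1 - cnj \<phi>2 * z)))"
  have "continuous_on {0..2*pi} (\<lambda>t. of_real (circ_density \<phi>1 \<phi>2 (cis t)) * cis t ^ n)"
    unfolding circ_density_def using assms(1,2) circ_normalizer_denominator_nonzero[OF assms(1,2)]
    by (intro continuous_intros) (auto simp: norm_mult)
  then have "prob_space.expectation M (\<lambda>\<omega>. Z \<omega> ^ n) =
      integral {0..2*pi} (\<lambda>t. of_real (circ_density \<phi>1 \<phi>2 (cis t)) * cis t ^ n)"
    using assms(4) circ_density_nonneg[OF assms(1,2)] borel_measurable_circ_density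
    by (intro integral_distributed_arc_length_circle) auto
  also have "\<dots> = circ_normalizer \<phi>1 \<phi>2 * (if \<phi>1 \<noteq> \<phi>2 then (h \<phi>1 - h \<phi>2) / (\<phi>1 - \<phi>2) else deriv h \<phi>1)"
    using circ_density_moment_has_integral[OF assms(1,2), of n] unfolding h_def by (rule integral_unique)
  finally show ?thesis
    using circ_moment_two_poles_closed_form[OF assms(1,2), of n] circ_moment_double_pole_closed_form[OF assms(1), of n]
    unfolding h_def by (cases "\<phi>1 = \<phi>2") simp_all
qed

end
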